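(* Let $(X,d,\preceq)$ be an ordered metric space such that $(X,d)$ is complete, and let $f,g:X\to X$ satisfy: (i) $f(X)\subseteq g(X)$; (ii) $f$ is $g$-comparable; (iii) $(f,g)$ is compatible; (iv) $g$ is continuous; (v) either $f$ is continuous or $(X,d,\preceq)$ has the $g$-TCC property; (vi) there exists $x_0\in X$ with $g(x_0)\prec\succ f(x_0)$; (vii) there exists $\alpha\in[0,1)$ with $d(fx,fy)\le\alpha\, d(gx,gy)$ for all $x,y\in X$ with $g(x)\prec\succ g(y)$; $(u_0)$ for each $x,y\in X$, $C(fx,fy,\prec\succ,g(X))$ is nonempty. Then $f$ and $g$ have a unique common fixed point.
   Context: An ordered metric space $(X,d,\preceq)$ is a nonempty set $X$ with a metric $d$ and a partial order $\preceq$. For $x,y\in X$, write $x\prec\succ y$ if $x\preceq y$ or $y\preceq x$. $f$ is $g$-comparable if $g(x)\prec\succ g(y)$ implies $f(x)\prec\succ f(y)$. $(f,g)$ is compatible if $\lim_n d(gfx_n,fgx_n)=0$ whenever $\{g(x_n)\}$ and $\{f(x_n)\}$ converge to the same point of $X$. A sequence $\{x_n\}$ is termwise monotone if $x_n\prec\succ x_{n+1}$ for all $n\ge0$. $(X,d,\preceq)$ has the $g$-TCC property if for every termwise monotone sequence $\{x_n\}$ in $X$ converging to $x\in X$ there is a subsequence with $g(x_{n_k})\prec\succ g(x)$ for all $k$. For $E\subseteq X$ and $a,b\in E$, $C(a,b,\prec\succ,E)$ is the class of finite families $e_1,\dots,e_k\in E$ with $k\ge2$, $e_1=a$, $e_k=b$,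 and $e_i\prec\succ e_{i+1}$ for $1\le i\le k-1$. A common fixed point is $x\in X$ with $x=g(x)=f(x)$. *)

theory Defs
  imports "HOL-Analysis.Analysis"
begin

definition is_partial_order :: "('a \<Rightarrow> 'a \<Rightarrow> bool) \<Rightarrow> bool" where
  "is_partial_order le \<longleftrightarrow> (\<forall>x. le x x) \<and> (\<forall>x y. le x y \<and> le y x \<longrightarrow> x = y)
     \<and> (\<forall>x y z. le x y \<and> le y z \<longrightarrow> le x z)"

definition comparable :: "('a \<Rightarrow> 'a \<Rightarrow> bool) \<Rightarrow> 'a \<Rightarrow> 'a \<Rightarrow> bool" where
  "comparable le x y \<longleftrightarrow> le x y \<or> le y x"

definition g_comparable :: "('a \<Rightarrow> 'a \<Rightarrow> bool) \<Rightarrow> ('a \<Rightarrow> 'a) \<Rightarrow> ('a \<Rightarrow> 'a) \<Rightarrow> bool" where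
  "g_comparable le f g \<longleftrightarrow> (\<forall>x y. comparable le (g x) (g y) \<longrightarrow> comparable le (f x) (f y))"

definition compatible :: "('a::metric_space \<Rightarrow> 'a) \<Rightarrow> ('a \<Rightarrow> 'a) \<Rightarrow> bool" where
  "compatible f g \<longleftrightarrow> (\<forall>xs :: nat \<Rightarrow> 'a. \<forall>z.
      (\<lambda>n. g (xs n)) \<longlonglongrightarrow> z \<and> (\<lambda>n. f (xs n)) \<longlonglongrightarrow> z
      \<longrightarrow> (\<lambda>n. dist (g (f (xs n))) (f (g (xs n)))) \<longlonglongrightarrow> 0)"

definition termwise_monotone :: "('a \<Rightarrow> 'a \<Rightarrow> bool) \<Rightarrow> (nat \<Rightarrow> 'a) \<Rightarrow> bool" where
  "termwise_monotone le xs \<longleftrightarrow> (\<forall>n. comparable le (xs n) (xs (Suc n)))"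

definition g_TCC :: "('a::metric_space \<Rightarrow> 'a \<Rightarrow> bool) \<Rightarrow> ('a \<Rightarrow> 'a) \<Rightarrow> bool" where
  "g_TCC le g \<longleftrightarrow> (\<forall>(xs::nat \<Rightarrow> 'a) x. termwise_monotone le xs \<and> xs \<longlonglongrightarrow> x \<longrightarrow>
      (\<exists>r::nat \<Rightarrow> nat. strict_mono r \<and> (\<forall>k. comparable le (g (xs (r k))) (g x))))"

text \<open>C(a,b,\<prec>\<succ>,E) as a set of lists [e_1,...,e_k], k \<ge> 2.\<close>
definition chain_class :: "('a \<Rightarrow> 'a \<Rightarrow> bool) \<Rightarrow> 'a \<Rightarrow> 'a \<Rightarrow> 'a set \<Rightarrow> 'a list set" where
  "chain_class le a b E = {es. length es \<ge> 2 \<and> set es \<subseteq> E \<and> hd es = a \<and> last es = b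
      \<and> (\<forall>i. Suc i < length es \<longrightarrow> comparable le (es ! i) (es ! Suc i))}"

end

theory Submission
  imports Defs
begin

text \<open>Choosing points with \<open>g x\<^sub>n\<^sub>+\<^sub>1 = f x\<^sub>n\<close> (Jungck's iteration), comparability of
  g-values propagates along the iteration and the contraction shrinks the distance of
  comparable g-values by the factor \<open>\<alpha>\<close> in each step. Hence \<open>g x\<^sub>n\<close> is Cauchy, and its
  limit \<open>z\<close> is a point of coincidence: compatibility forces \<open>g z = f z\<close> once \<open>f (g x\<^sub>n)\<close>
  tends to \<open>f z\<close> along a subsequence, which holds by continuity of \<open>f\<close> or, under g-TCC, by
  the contraction applied to a subsequence comparable with \<open>z\<close>. Two points of coincidence
  are joined by a chain of comparable g-values whose links all contract under the iteration,
  so the value \<open>g z\<close> is unique; since compatible maps commute at points of coincidence,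
  \<open>g z\<close> is itself one and hence the unique common fixed point.\<close>

lemma dist_le_sum_dist_Suc:
  fixes y :: "nat \<Rightarrow> 'a::metric_space"
  assumes "m \<le> n"
  shows "dist (y m) (y n) \<le> (\<Sum>i\<in>{m..<n}. dist (y i) (y (Suc i)))"
  using assms
proof (induction n rule: dec_induct)
  case (step n)
  have "dist (y m) (y (Suc n)) \<le> dist (y m) (y n) + dist (y n) (y (Suc n))"
    by (rule dist_triangle)
  with step show ?case by simp
qed simp

lemma Cauchy_if_summable_dist_Suc:
  fixes y :: "nat \<Rightarrow> 'a::metric_space"
  assumes "summable (\<lambda>n. dist (y n) (y (Suc n)))"
  shows "Cauchy y"
proof (rule metric_CauchyI)
  fix e :: real assume "e > 0"
  with assms obtain N where N: "\<And>m n. m \<ge> N \<Longrightarrow> norm (\<Sum>i\<in>{m..<n}. dist (y i) (y (Suc i))) < e"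
    unfolding summable_Cauchy by blast
  have "dist (y m) (y n) < e" if "m \<le> n" "m \<ge> N" for m n
    using dist_le_sum_dist_Suc[OF that(1), of y] N[OF that(2), of n] by simp
  then show "\<exists>M. \<forall>m\<ge>M. \<forall>n\<ge>M. dist (y m) (y n) < e"
    by (metis dist_commute nle_le)
qed

lemma Cauchy_if_dist_Suc_le_geometric:
  fixes y :: "nat \<Rightarrow> 'a::metric_space"
  assumes "0 \<le> c" "c < 1" and "\<And>n. dist (y n) (y (Suc n)) \<le> c ^ n * D"
  shows "Cauchy y"
proof (rule Cauchy_if_summable_dist_Suc)
  show "summable (\<lambda>n. dist (y n) (y (Suc n)))"
    by (rule summable_comparison_test'[where g = "\<lambda>n. c ^ n * D"])
       (use assms in \<open>auto intro: summable_mult2 summable_geometric\<close>)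
qed

lemma compatible_commute_at_coincidence:
  assumes "compatible f g" and "g z = f z"
  shows "g (f z) = f (g z)"
proof -
  have "(\<lambda>n. dist (g (f z)) (f (g z))) \<longlonglongrightarrow> 0"
    using assms(1)[unfolded compatible_def, rule_format, of "\<lambda>_. z" "g z"] assms(2) by simp
  then show ?thesis by (simp add: LIMSEQ_const_iff)
qed

lemma coincidence_if_compatible:
  assumes "compatible f g" and "isCont g z"
    and gxs: "(\<lambda>n. g (xs n)) \<longlonglongrightarrow> z" and fxs: "(\<lambda>n. f (xs n)) \<longlonglongrightarrow> z"
    and r: "strict_mono r" and fgxs: "(\<lambda>k. f (g (xs (r k)))) \<longlonglongrightarrow> f z"
  shows "g z = f z"
proof -
  have "(\<lambda>n. dist (g (f (xs n))) (f (g (xs n)))) \<longlonglongrightarrow> 0"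
    using assms(1) gxs fxs unfolding compatible_def by blast
  then have "(\<lambda>k. dist (g (f (xs (r k)))) (f (g (xs (r k))))) \<longlonglongrightarrow> 0"
    using LIMSEQ_subseq_LIMSEQ[OF _ r] by (simp add: o_def)
  moreover have "(\<lambda>k. g (f (xs (r k)))) \<longlonglongrightarrow> g z"
    using isCont_tendsto_compose[OF assms(2) LIMSEQ_subseq_LIMSEQ[OF fxs r]] by (simp add: o_def)
  then have "(\<lambda>k. dist (g (f (xs (r k)))) (f (g (xs (r k))))) \<longlonglongrightarrow> dist (g z) (f z)"
    using fgxs by (rule tendsto_dist)
  ultimately show ?thesis
    using LIMSEQ_unique by fastforce
qed

lemma unique_common_fixed_point_if_unique_coincidence_value:
  assumes unique: "\<And>u v. g u = f u \<Longrightarrow> g v = f v \<Longrightarrow> g u = g v"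
    and "g z = f z" and "g (f z) = f (g z)"
  shows "\<exists>!x. g x = x \<and> f x = x"
proof
  have "g (g z) = f (g z)" using assms(2,3) by simp
  then have "g (g z) = g z" using unique assms(2) by blast
  then show "g (g z) = g z \<and> f (g z) = g z" using assms(2,3) by simp
next
  fix x assume "g x = x \<and> f x = x"
  then show "x = g z" using unique[of x z] assms(2) by simp
qed

locale jungck_contraction =
  fixes le :: "'a::metric_space \<Rightarrow> 'a \<Rightarrow> bool" and f g :: "'a \<Rightarrow> 'a" and \<alpha> :: real
  assumes le_refl: "\<And>x. le x x"
    and range_f_subset: "range f \<subseteq> range g"
    and f_g_comparable: "g_comparable le f g"
    and alpha_nonneg: "0 \<le> \<alpha>" and alpha_less_one: "\<alpha> < 1"
    and contraction: "\<And>x y. comparable le (g x) (g y) \<Longrightarrow> dist (f x) (f y) \<le> \<alpha> * dist (g x) (g y)"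
begin

text \<open>One step of Jungck's iteration; the choice is possible because \<open>range f \<subseteq> range g\<close>.\<close>
definition step :: "'a \<Rightarrow> 'a" where
  "step p = (SOME q. g q = f p)"

lemma g_step: "g (step p) = f p"
proof -
  have "f p \<in> range g" using range_f_subset by blast
  then have "\<exists>q. g q = f p" by (metis imageE)
  then show ?thesis unfolding step_def by (rule someI_ex)
qed

lemma comparable_g_iterates:
  assumes "comparable le (g p) (g q)"
  shows "comparable le (g ((step ^^ n) p)) (g ((step ^^ n) q))"
proof (induction n)
  case (Suc n)
  then have "comparable le (f ((step ^^ n) p)) (f ((step ^^ n) q))"
    using f_g_comparable unfolding g_comparable_def by blast
  then show ?case by (simp add: g_step)
qed (use assms in simp)

lemma dist_g_iterates_le:
  assumes "comparable le (g p) (g q)"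
  shows "dist (g ((step ^^ n) p)) (g ((step ^^ n) q)) \<le> \<alpha> ^ n * dist (g p) (g q)"
proof (induction n)
  case (Suc n)
  have "dist (g ((step ^^ Suc n) p)) (g ((step ^^ Suc n) q))
      \<le> \<alpha> * dist (g ((step ^^ n) p)) (g ((step ^^ n) q))"
    using contraction[OF comparable_g_iterates[OF assms]] by (simp add: g_step)
  also have "\<dots> \<le> \<alpha> * (\<alpha> ^ n * dist (g p) (g q))"
    by (rule mult_left_mono[OF Suc alpha_nonneg])
  finally show ?case by (simp add: mult.assoc)
qed simp

lemma g_iterates_eq:
  assumes "g p = g q"
  shows "g ((step ^^ n) p) = g ((step ^^ n) q)"
  using dist_g_iterates_le[of p q n] assms le_refl by (simp add: comparable_def)

lemma g_iterates_coincidence: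
  assumes "g u = f u"
  shows "g ((step ^^ n) u) = g u"
proof (induction n)
  case (Suc n)
  have "g ((step ^^ n) (step u)) = g ((step ^^ n) u)"
    using g_iterates_eq assms by (simp add: g_step)
  then show ?case using Suc by (simp add: funpow_Suc_right del: funpow.simps)
qed simp

text \<open>Along a chain of successively comparable points the triangle inequality
  contracts every link, so the ends of the iterated chain approach each other geometrically.\<close>
lemma dist_g_iterates_chain_le:
  assumes "successively (\<lambda>p q. comparable le (g p) (g q)) ps" and "ps \<noteq> []"
  shows "\<exists>S. \<forall>n. dist (g ((step ^^ n) (hd ps))) (g ((step ^^ n) (last ps))) \<le> \<alpha> ^ n * S"
  using assms
proof (induction ps rule: induct_list012)
  case (3 p q ps)
  then obtain S
    where S: "\<And>n. dist (g ((step ^^ n) q)) (g ((step ^^ n) (last (q # ps)))) \<le> \<alpha> ^ n * S"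
    by auto
  have "dist (g ((step ^^ n) p)) (g ((step ^^ n) (last (q # ps))))
      \<le> \<alpha> ^ n * (dist (g p) (g q) + S)" for n
  proof -
    have "dist (g ((step ^^ n) p)) (g ((step ^^ n) (last (q # ps))))
        \<le> dist (g ((step ^^ n) p)) (g ((step ^^ n) q))
          + dist (g ((step ^^ n) q)) (g ((step ^^ n) (last (q # ps))))"
      by (rule dist_triangle)
    also have "\<dots> \<le> \<alpha> ^ n * dist (g p) (g q) + \<alpha> ^ n * S"
      using dist_g_iterates_le 3(3) S by (intro add_mono) auto
    finally show ?thesis by (simp add: distrib_left)
  qed
  then show ?case by (intro exI[of _ "dist (g p) (g q) + S"]) simp
qed (auto intro: exI[of _ 0])

lemma coincidence_value_unique:
  assumes u: "g u = f u" and v: "g v = f v"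
    and chain: "chain_class le (f u) (f v) (range g) \<noteq> {}"
  shows "g u = g v"
proof -
  obtain es where es: "es \<in> chain_class le (f u) (f v) (range g)"
    using chain by blast
  define ps where "ps = map (\<lambda>e. SOME p. g p = e) es"
  have "map g ps = es"
    unfolding ps_def map_map
  proof (rule map_idI)
    fix e assume "e \<in> set es"
    then have "\<exists>p. g p = e" using es by (auto simp: chain_class_def)
    then show "(g \<circ> (\<lambda>e. SOME p. g p = e)) e = e" unfolding o_def by (rule someI_ex)
  qed
  then have chain_ps: "successively (\<lambda>p q. comparable le (g p) (g q)) ps" and "ps \<noteq> []"
    using es by (auto simp: chain_class_def successively_conv_nth simp flip: successively_map)
  with \<open>map g ps = es\<close> have "g (hd ps) = g u" and "g (last ps) = g v"
    using es u v by (auto simp: chain_class_def simp flip: hd_map last_map)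
  from dist_g_iterates_chain_le[OF chain_ps \<open>ps \<noteq> []\<close>] obtain S
    where S: "\<And>n. dist (g ((step ^^ n) (hd ps))) (g ((step ^^ n) (last ps))) \<le> \<alpha> ^ n * S"
    by blast
  have "g ((step ^^ n) (hd ps)) = g u" and "g ((step ^^ n) (last ps)) = g v" for n
    using g_iterates_eq \<open>g (hd ps) = g u\<close> \<open>g (last ps) = g v\<close>
      g_iterates_coincidence[OF u] g_iterates_coincidence[OF v] by metis+
  with S have S: "\<And>n. dist (g u) (g v) \<le> \<alpha> ^ n * S"
    by metis
  have "(\<lambda>n. \<alpha> ^ n * S) \<longlonglongrightarrow> 0"
    using alpha_nonneg alpha_less_one by (intro tendsto_mult_left_zero LIMSEQ_power_zero) auto
  then have "dist (g u) (g v) \<le> 0"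
    using S by (intro tendsto_lowerbound) auto
  then show ?thesis by simp
qed

lemma jungck_sequence_termwise_monotone:
  assumes "comparable le (g x0) (f x0)"
  shows "termwise_monotone le (\<lambda>n. g ((step ^^ n) x0))"
  using comparable_g_iterates[of x0 "step x0"] assms
  by (simp add: termwise_monotone_def g_step funpow_Suc_right del: funpow.simps)

lemma Cauchy_jungck_sequence:
  assumes "comparable le (g x0) (f x0)"
  shows "Cauchy (\<lambda>n. g ((step ^^ n) x0))"
proof (rule Cauchy_if_dist_Suc_le_geometric[OF alpha_nonneg alpha_less_one])
  fix n
  show "dist (g ((step ^^ n) x0)) (g ((step ^^ Suc n) x0)) \<le> \<alpha> ^ n * dist (g x0) (f x0)"
    using dist_g_iterates_le[of x0 "step x0" n] assms
    by (simp add: g_step funpow_Suc_right del: funpow.simps)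
qed

text \<open>g-TCC gives comparability with the limit along a subsequence, where the
  contraction condition then transfers convergence from g to f.\<close>
lemma tendsto_f_g_subseq_if_g_TCC:
  assumes "g_TCC le g" and "isCont g z"
    and mono: "termwise_monotone le (\<lambda>n. g (xs n))" and gxs: "(\<lambda>n. g (xs n)) \<longlonglongrightarrow> z"
  obtains r where "strict_mono r" and "(\<lambda>k. f (g (xs (r k)))) \<longlonglongrightarrow> f z"
proof -
  obtain r :: "nat \<Rightarrow> nat"
    where r: "strict_mono r" and comp: "\<And>k. comparable le (g (g (xs (r k)))) (g z)"
    using assms(1)[unfolded g_TCC_def, rule_format, OF conjI[OF mono gxs]] by blast
  have "(\<lambda>k. g (g (xs (r k)))) \<longlonglongrightarrow> g z"
    using isCont_tendsto_compose[OF assms(2) LIMSEQ_subseq_LIMSEQ[OF gxs r]] by (simp add: o_def)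
  then have "(\<lambda>k. \<alpha> * dist (g (g (xs (r k)))) (g z)) \<longlonglongrightarrow> 0"
    by (intro tendsto_mult_right_zero) (simp add: tendsto_dist_iff[symmetric])
  then have "(\<lambda>k. dist (f (g (xs (r k)))) (f z)) \<longlonglongrightarrow> 0"
    by (rule Lim_null_comparison[OF always_eventually, rotated]) (simp add: contraction[OF comp])
  then have "(\<lambda>k. f (g (xs (r k)))) \<longlonglongrightarrow> f z"
    by (subst tendsto_dist_iff)
  with r show ?thesis by (rule that)
qed

end

theorem theorem4p6:
  fixes le :: "'a::complete_space \<Rightarrow> 'a \<Rightarrow> bool"
    and f g :: "'a \<Rightarrow> 'a"
  assumes "is_partial_order le"
    and "f ` UNIV \<subseteq> g ` UNIV"
    and "g_comparable le f g"
    and "compatible f g"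
    and "continuous_on UNIV g"
    and "continuous_on UNIV f \<or> g_TCC le g"
    and "\<exists>x0. comparable le (g x0) (f x0)"
    and "\<exists>\<alpha>::real. 0 \<le> \<alpha> \<and> \<alpha> < 1 \<and>
           (\<forall>x y. comparable le (g x) (g y) \<longrightarrow> dist (f x) (f y) \<le> \<alpha> * dist (g x) (g y))"
    and "\<forall>x y. chain_class le (f x) (f y) (g ` UNIV) \<noteq> {}"
  shows "\<exists>!x. g x = x \<and> f x = x"
proof -
  obtain \<alpha> where "jungck_contraction le f g \<alpha>"
    using assms(1-3,8) by (auto simp: jungck_contraction_def is_partial_order_def)
  then interpret jungck_contraction le f g \<alpha> .
  obtain x0 where x0: "comparable le (g x0) (f x0)" using assms(7) by blast
  define xs where "xs n = (step ^^ n) x0" for n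
  obtain z where gxs: "(\<lambda>n. g (xs n)) \<longlonglongrightarrow> z"
    using Cauchy_jungck_sequence[OF x0] unfolding xs_def Cauchy_convergent_iff convergent_def by blast
  have fxs: "(\<lambda>n. f (xs n)) \<longlonglongrightarrow> z"
    using LIMSEQ_Suc[OF gxs] by (simp add: xs_def g_step)
  have g_cont: "isCont g z"
    using assms(5) by (simp add: continuous_on_eq_continuous_at)
  obtain r where "strict_mono r" and "(\<lambda>k. f (g (xs (r k)))) \<longlonglongrightarrow> f z"
    using assms(6)
  proof
    assume "continuous_on UNIV f"
    then have "isCont f z" by (simp add: continuous_on_eq_continuous_at)
    then show thesis
      by (intro that[of id]) (simp_all add: strict_mono_id isCont_tendsto_compose[OF _ gxs])
  next
    assume tcc: "g_TCC le g"
    have "termwise_monotone le (\<lambda>n. g (xs n))"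
      using jungck_sequence_termwise_monotone[OF x0] by (simp add: xs_def)
    then show thesis
      by (rule tendsto_f_g_subseq_if_g_TCC[OF tcc g_cont _ gxs]) (rule that)
  qed
  then have "g z = f z"
    using coincidence_if_compatible[OF assms(4) g_cont gxs fxs] by blast
  moreover have "g u = g v" if "g u = f u" "g v = f v" for u v
    using coincidence_value_unique[OF that] assms(9) by simp
  ultimately show ?thesis
    by (intro unique_common_fixed_point_if_unique_coincidence_value
        compatible_commute_at_coincidence[OF assms(4)])
qed

end
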